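(* Let $\Omega\subset\mathbb{R}^d$ be a bounded open set with regular boundary $\partial\Omega$, and let $\pi$ be a probability density on $\Omega$, positive on $\Omega$, whose first and second derivatives are continuous. Let $P$ be a polynomial on $\mathbb{R}^d$ and let $\psi=P\sqrt{\pi}$. If $$\pi(\mathbf x)\,\frac{\partial P(\mathbf x)}{\partial x_j}=0\quad\text{for all }\mathbf x\in\partial\Omega,\ j=1,\ldots,d,$$ then the zero-variance estimator is unbiased, i.e. $\mathbb{E}_\pi\!\left[\frac{H\psi}{\sqrt{\pi}}\right]=\int_\Omega H\psi(\mathbf x)\sqrt{\pi(\mathbf x)}\,d\mathbf x=0$, so that for every $\pi$-integrable $f$ the function $\tilde f=f+\frac{H\psi}{\sqrt\pi}$ satisfies $\mathbb{E}_\pi[\tilde f]=\mathbb{E}_\pi[f]$.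
   Context: $H$ denotes the Schrödinger-type Hamiltonian operator associated with $\pi$: for a twice differentiable $g$, $Hg=-\frac12\Delta g+Vg$, where $\Delta=\sum_{i=1}^d\partial^2/\partial x_i^2$ is the Laplacian and $V=\frac{1}{2\sqrt{\pi}}\Delta\sqrt{\pi}$ (so that $H\sqrt\pi=0$). For $\psi=P\sqrt\pi$ one has $\frac{H\psi}{\sqrt\pi}=-\frac12\Delta P+\nabla P\cdot\mathbf z$ with $\mathbf z=-\frac12\nabla\ln\pi$. $\mathbf n$ denotes the outward unit normal to $\partial\Omega$. *)

theory Defs
  imports "HOL-Analysis.Analysis"
begin

definition partial :: "'n::finite \<Rightarrow> (real^'n \<Rightarrow> real) \<Rightarrow> real^'n \<Rightarrow> real" where
  "partial j f x = deriv (\<lambda>t. f (x + t *\<^sub>R axis j 1)) 0"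

definition laplacian :: "(real^'n::finite \<Rightarrow> real) \<Rightarrow> real^'n \<Rightarrow> real" where
  "laplacian f x = (\<Sum>j\<in>UNIV. partial j (partial j f) x)"

definition potential :: "(real^'n::finite \<Rightarrow> real) \<Rightarrow> real^'n \<Rightarrow> real" where
  "potential \<pi> x = laplacian (\<lambda>y. sqrt (\<pi> y)) x / (2 * sqrt (\<pi> x))"

definition hamiltonian :: "(real^'n::finite \<Rightarrow> real) \<Rightarrow> (real^'n \<Rightarrow> real) \<Rightarrow> real^'n \<Rightarrow> real" where
  "hamiltonian \<pi> g x = - (1/2) * laplacian g x + potential \<pi> x * g x"

definition is_polynomial :: "(real^'n::finite \<Rightarrow> real) \<Rightarrow> bool" where
  "is_polynomial P \<longleftrightarrow> (\<exists>A c. finite A \<and>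
     (\<forall>x. P x = (\<Sum>\<alpha>\<in>A. c \<alpha> * (\<Prod>j\<in>UNIV. (x $ j) ^ (\<alpha> j)))))"

definition C1_on :: "(real^'n::finite) set \<Rightarrow> (real^'n \<Rightarrow> real) \<Rightarrow> bool" where
  "C1_on S f \<longleftrightarrow> (\<exists>f'. (\<forall>x\<in>S. (f has_derivative f' x) (at x)) \<and>
                         (\<forall>v. continuous_on S (\<lambda>x. f' x v)))"

definition C2_on :: "(real^'n::finite) set \<Rightarrow> (real^'n \<Rightarrow> real) \<Rightarrow> bool" where
  "C2_on S f \<longleftrightarrow> (\<exists>f' f''. (\<forall>x\<in>S. (f has_derivative f' x) (at x)) \<and>
        (\<forall>x\<in>S. \<forall>v. ((\<lambda>y. f' y v) has_derivative f'' x v) (at x)) \<and>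
        (\<forall>v w. continuous_on S (\<lambda>x. f'' x v w)))"

text \<open>Regular (C^1) boundary: near every boundary point, after choosing a coordinate k and
  an orientation s, the domain is the subgraph of a C^1 function of the remaining coordinates.\<close>
definition regular_boundary :: "(real^'n::finite) set \<Rightarrow> bool" where
  "regular_boundary \<Omega> \<longleftrightarrow>
     (\<forall>p\<in>frontier \<Omega>. \<exists>r>0. \<exists>k. \<exists>s\<in>{-1, 1::real}. \<exists>g.
        C1_on UNIV g \<and>
        (\<forall>x y. (\<forall>i. i \<noteq> k \<longrightarrow> x $ i = y $ i) \<longrightarrow> g x = g y) \<and>
        \<Omega> \<inter> ball p r = {x\<in>ball p r. s * x $ k < g x})"

end

(* On Omega write q = sqrt pi. The product rule gives
     Lap (P q) = q Lap P + 2 grad P . grad q + P Lap q,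
   the potential term V P q = P Lap q / 2 cancels the last summand, and 2 q grad q = grad pi, so
     H(P q) q = -1/2 sum_j d_j (pi d_j P).
   Each d_j (pi d_j P) integrates to zero over Omega. By the boundary condition, pi d_j P extended by
   zero is a continuous function F of bounded support which is Lipschitz along the j-th axis. Hence the
   difference quotients (F (x + h e_j) - F x) / h have integral zero by translation invariance, are
   dominated by a multiple of an indicator function, and converge to d_j (pi d_j P) on Omega and to 0
   outside its closure; the boundary is null because it is locally a C^1 graph. Dominated convergence
   concludes, and the statement about f follows from (f + H(P q) / q) pi = f pi + H(P q) q on Omega. *)

theory Submission
  imports Defs
begin

section \<open>Partial derivatives along coordinate axes\<close>

text \<open>\<^const>\<open>partial\<close> is defined through \<^const>\<open>deriv\<close>, which is junk where no derivative exists.\<close>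

definition partial_differentiable :: "'n::finite \<Rightarrow> (real^'n \<Rightarrow> real) \<Rightarrow> real^'n \<Rightarrow> bool" where
  "partial_differentiable j f x \<longleftrightarrow> (\<lambda>t. f (x + t *\<^sub>R axis j 1)) differentiable (at 0)"

lemma partial_eqI:
  assumes "((\<lambda>t. f (x + t *\<^sub>R axis j 1)) has_real_derivative D) (at 0)"
  shows "partial j f x = D"
  unfolding partial_def using assms by (rule DERIV_imp_deriv)

lemma partial_differentiableI:
  assumes "((\<lambda>t. f (x + t *\<^sub>R axis j 1)) has_real_derivative D) (at 0)"
  shows "partial_differentiable j f x"
  using assms unfolding partial_differentiable_def real_differentiable_def by blast

lemma partial_differentiableD:
  assumes "partial_differentiable j f x"
  shows "((\<lambda>t. f (x + t *\<^sub>R axis j 1)) has_real_derivative partial j f x) (at 0)"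
  using assms unfolding partial_differentiable_def partial_def
  by (simp add: DERIV_deriv_iff_real_differentiable)

lemma has_real_derivative_line_shift:
  fixes x v :: "'a::real_normed_vector"
  assumes "((\<lambda>t. f ((x + s *\<^sub>R v) + t *\<^sub>R v)) has_real_derivative D) (at 0)"
  shows "((\<lambda>t. f (x + t *\<^sub>R v)) has_real_derivative D) (at s)"
proof -
  have "((\<lambda>t. f (x + (t + s) *\<^sub>R v)) has_real_derivative D) (at 0)"
    using assms by (simp add: scaleR_add_left add_ac)
  then show ?thesis
    using DERIV_shift[of "\<lambda>t. f (x + t *\<^sub>R v)" D 0 s] by simp
qed

lemma open_line_preimage:
  fixes x v :: "'a::real_normed_vector"
  assumes "open S"
  shows "open {t::real. x + t *\<^sub>R v \<in> S}"
  using continuous_open_vimage[OF assms, of "\<lambda>t. x + t *\<^sub>R v"]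
  by (auto intro!: continuous_intros simp: vimage_def)

lemma has_real_derivative_line_transform_open:
  fixes x v :: "'a::real_normed_vector"
  assumes "open S" "x \<in> S" "\<And>y. y \<in> S \<Longrightarrow> f y = g y"
    and "((\<lambda>t. f (x + t *\<^sub>R v)) has_real_derivative D) (at 0)"
  shows "((\<lambda>t. g (x + t *\<^sub>R v)) has_real_derivative D) (at 0)"
  by (rule has_field_derivative_transform_within_open[OF assms(4) open_line_preimage[OF assms(1)]])
     (use assms(2,3) in auto)

lemma has_derivative_imp_has_real_derivative_line:
  assumes "(f has_derivative F) (at x)"
  shows "((\<lambda>t. f (x + t *\<^sub>R v)) has_real_derivative F v) (at 0)"
proof -
  have "((\<lambda>t. x + t *\<^sub>R v) has_derivative (\<lambda>t. t *\<^sub>R v)) (at 0)"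
    by (auto intro!: derivative_eq_intros)
  moreover have "(f has_derivative F) (at (x + 0 *\<^sub>R v))"
    using assms by simp
  ultimately have "((\<lambda>t. f (x + t *\<^sub>R v)) has_derivative (\<lambda>t. F (t *\<^sub>R v))) (at 0)"
    by (rule has_derivative_compose)
  moreover have "(\<lambda>t. F (t *\<^sub>R v)) = (*) (F v)"
    using linear_scale[OF has_derivative_linear[OF assms]] by (auto simp: mult.commute)
  ultimately show ?thesis unfolding has_field_derivative_def by simp
qed

lemma C2_on_partial_differentiable:
  assumes "open S" "C2_on S f" "x \<in> S"
  shows "partial_differentiable j f x" and "partial_differentiable j (partial j f) x"
proof -
  obtain f' f'' where f': "\<And>y. y \<in> S \<Longrightarrow> (f has_derivative f' y) (at y)"
    and f'': "\<And>y v. y \<in> S \<Longrightarrow> ((\<lambda>z. f' z v) has_derivative f'' y v) (at y)"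
    using assms(2) unfolding C2_on_def by blast
  have partial_f: "partial j f y = f' y (axis j 1)" if "y \<in> S" for y
    by (rule partial_eqI[OF has_derivative_imp_has_real_derivative_line[OF f'[OF that]]])
  show "partial_differentiable j f x"
    by (rule partial_differentiableI[OF has_derivative_imp_has_real_derivative_line[OF f'[OF assms(3)]]])
  show "partial_differentiable j (partial j f) x"
    by (rule partial_differentiableI[OF has_real_derivative_line_transform_open[OF assms(1,3)]])
       (use partial_f has_derivative_imp_has_real_derivative_line[OF f''[OF assms(3)]] in auto)
qed

lemma has_real_derivative_monomials_line:
  fixes x :: "real^'n::finite"
  assumes "finite A"
  shows "((\<lambda>t. \<Sum>\<alpha>\<in>A. c \<alpha> * (\<Prod>i\<in>UNIV. ((x + t *\<^sub>R axis j 1) $ i) ^ e \<alpha> i)) has_real_derivative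
           (\<Sum>\<alpha>\<in>A. c \<alpha> * real (e \<alpha> j) * (\<Prod>i\<in>UNIV. (x $ i) ^ ((e \<alpha>)(j := e \<alpha> j - 1)) i))) (at 0)"
proof -
  define rest where "rest \<alpha> = (\<Prod>i\<in>UNIV - {j}. (x $ i) ^ e \<alpha> i)" for \<alpha>
  have line: "(\<Prod>i\<in>UNIV. ((x + t *\<^sub>R axis j 1) $ i) ^ e \<alpha> i) = (x $ j + t) ^ e \<alpha> j * rest \<alpha>" for t \<alpha>
    unfolding rest_def by (subst prod.remove[of _ j]) (auto simp: axis_def intro!: prod.cong)
  have lowered: "(\<Prod>i\<in>UNIV. (x $ i) ^ ((e \<alpha>)(j := e \<alpha> j - 1)) i) = x $ j ^ (e \<alpha> j - 1) * rest \<alpha>" for \<alpha>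
    unfolding rest_def by (subst prod.remove[of _ j]) (auto intro!: prod.cong)
  have "((\<lambda>t. \<Sum>\<alpha>\<in>A. c \<alpha> * ((x $ j + t) ^ e \<alpha> j * rest \<alpha>)) has_real_derivative
          (\<Sum>\<alpha>\<in>A. c \<alpha> * (real (e \<alpha> j) * (x $ j + 0) ^ (e \<alpha> j - 1) * rest \<alpha>))) (at 0)"
    using assms by (auto intro!: derivative_eq_intros sum.cong simp: mult_ac)
  then show ?thesis unfolding line lowered by (simp add: mult_ac)
qed

text \<open>Lowering an exponent can merge distinct monomials, so exponents are given by an arbitrary map.\<close>

lemma is_polynomial_monomials:
  fixes c :: "('n::finite \<Rightarrow> nat) \<Rightarrow> real"
  assumes "finite A"
  shows "is_polynomial (\<lambda>x::real^'n. \<Sum>\<alpha>\<in>A. c \<alpha> * (\<Prod>i\<in>UNIV. (x $ i) ^ e \<alpha> i))"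
proof -
  define d where "d \<beta> = (\<Sum>\<alpha>\<in>{\<alpha>\<in>A. e \<alpha> = \<beta>}. c \<alpha>)" for \<beta>
  have "(\<Sum>\<alpha>\<in>A. c \<alpha> * (\<Prod>i\<in>UNIV. (x $ i) ^ e \<alpha> i))
      = (\<Sum>\<beta>\<in>e ` A. d \<beta> * (\<Prod>i\<in>UNIV. (x $ i) ^ \<beta> i))" for x :: "real^'n"
    unfolding sum.image_gen[OF assms, of _ e] d_def sum_distrib_right by (intro sum.cong) auto
  then show ?thesis
    unfolding is_polynomial_def using assms by (intro exI[of _ "e ` A"] exI[of _ d]) simp
qed

lemma
  assumes "is_polynomial P"
  shows is_polynomial_partial: "is_polynomial (partial j P)"
    and polynomial_partial_differentiable: "partial_differentiable j P x"
proof -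
  obtain A c where A: "finite A" and P: "\<And>x. P x = (\<Sum>\<alpha>\<in>A. c \<alpha> * (\<Prod>i\<in>UNIV. (x $ i) ^ \<alpha> i))"
    using assms unfolding is_polynomial_def by blast
  have deriv: "((\<lambda>t. P (y + t *\<^sub>R axis j 1)) has_real_derivative
      (\<Sum>\<alpha>\<in>A. c \<alpha> * real (\<alpha> j) * (\<Prod>i\<in>UNIV. (y $ i) ^ (\<alpha>(j := \<alpha> j - 1)) i))) (at 0)" for y
    unfolding P using has_real_derivative_monomials_line[OF A, where c=c and e="\<lambda>\<alpha>. \<alpha>"] by simp
  have "partial j P = (\<lambda>y. \<Sum>\<alpha>\<in>A. c \<alpha> * real (\<alpha> j) * (\<Prod>i\<in>UNIV. (y $ i) ^ (\<alpha>(j := \<alpha> j - 1)) i))"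
    using partial_eqI[OF deriv] by (rule ext)
  then show "is_polynomial (partial j P)"
    using is_polynomial_monomials[OF A, where c="\<lambda>\<alpha>. c \<alpha> * real (\<alpha> j)"] by (simp only:)
  show "partial_differentiable j P x"
    by (rule partial_differentiableI[OF deriv])
qed

lemma continuous_on_polynomial:
  assumes "is_polynomial P"
  shows "continuous_on S P"
proof -
  obtain A c where "\<And>x. P x = (\<Sum>\<alpha>\<in>A. c \<alpha> * (\<Prod>i\<in>UNIV. (x $ i) ^ \<alpha> i))"
    using assms unfolding is_polynomial_def by blast
  then have "P = (\<lambda>x. \<Sum>\<alpha>\<in>A. c \<alpha> * (\<Prod>i\<in>UNIV. (x $ i) ^ \<alpha> i))" by blast
  then show ?thesis
    by (simp only:) (intro continuous_on_sum continuous_on_mult continuous_on_const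
        continuous_on_prod continuous_on_power continuous_on_component continuous_on_id)
qed

section \<open>The Hamiltonian applied to \<open>P \<surd>\<pi>\<close>\<close>

lemma partial_mult:
  assumes "partial_differentiable j f x" "partial_differentiable j g x"
  shows "partial j (\<lambda>y. f y * g y) x = partial j f x * g x + f x * partial j g x"
  using DERIV_mult[OF partial_differentiableD[OF assms(1)] partial_differentiableD[OF assms(2)]]
  by (intro partial_eqI) (simp add: mult.commute)

lemma partial_partial_mult:
  assumes "open S" "x \<in> S"
    and "\<And>y. y \<in> S \<Longrightarrow> partial_differentiable j f y \<and> partial_differentiable j g y"
    and "partial_differentiable j (partial j f) x" "partial_differentiable j (partial j g) x"
  shows "partial j (partial j (\<lambda>y. f y * g y)) x
       = partial j (partial j f) x * g x + 2 * (partial j f x * partial j g x)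
         + f x * partial j (partial j g) x"
proof (rule partial_eqI)
  let ?line = "\<lambda>h t. h (x + t *\<^sub>R axis j 1)"
  have fg: "partial_differentiable j f x" "partial_differentiable j g x"
    using assms(2,3) by auto
  have product: "partial j (\<lambda>y. f y * g y) y = partial j f y * g y + f y * partial j g y"
    if "y \<in> S" for y
    using assms(3)[OF that] partial_mult by blast
  have product_rule: "((\<lambda>t. ?line (partial j f) t * ?line g t + ?line f t * ?line (partial j g) t)
      has_real_derivative partial j (partial j f) x * g x + 2 * (partial j f x * partial j g x)
         + f x * partial j (partial j g) x) (at 0)"
    using DERIV_add[OF DERIV_mult[OF partial_differentiableD[OF assms(4)] partial_differentiableD[OF fg(2)]]
        DERIV_mult[OF partial_differentiableD[OF fg(1)] partial_differentiableD[OF assms(5)]]]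
    by (simp add: algebra_simps)
  show "((\<lambda>t. partial j (\<lambda>y. f y * g y) (x + t *\<^sub>R axis j 1)) has_real_derivative
      partial j (partial j f) x * g x + 2 * (partial j f x * partial j g x)
      + f x * partial j (partial j g) x) (at 0)"
    by (rule has_real_derivative_line_transform_open[OF assms(1,2) _ product_rule]) (simp add: product)
qed

lemma laplacian_mult:
  assumes "open S" "x \<in> S"
    and "\<And>j y. y \<in> S \<Longrightarrow> partial_differentiable j f y \<and> partial_differentiable j g y"
    and "\<And>j. partial_differentiable j (partial j f) x \<and> partial_differentiable j (partial j g) x"
  shows "laplacian (\<lambda>y. f y * g y) x
       = laplacian f x * g x + 2 * (\<Sum>j\<in>UNIV. partial j f x * partial j g x) + f x * laplacian g x"
proof -
  have "partial j (partial j (\<lambda>y. f y * g y)) x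
      = partial j (partial j f) x * g x + 2 * (partial j f x * partial j g x)
        + f x * partial j (partial j g) x" for j
    by (rule partial_partial_mult[OF assms(1,2)]) (use assms(3,4) in auto)
  then show ?thesis
    unfolding laplacian_def sum_distrib_left sum_distrib_right sum.distrib[symmetric] by simp
qed

lemma has_real_derivative_sqrt_line:
  assumes "\<pi> x > 0" "partial_differentiable j \<pi> x"
  shows "((\<lambda>t. sqrt (\<pi> (x + t *\<^sub>R axis j 1))) has_real_derivative
           partial j \<pi> x / (2 * sqrt (\<pi> x))) (at 0)"
proof -
  have "\<pi> (x + 0 *\<^sub>R axis j 1) > 0" using assms(1) by simp
  from DERIV_chain2[OF DERIV_real_sqrt[OF this] partial_differentiableD[OF assms(2)]]
  show ?thesis by (simp add: field_simps)
qed


lemma partial_sqrt: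
  assumes "\<pi> x > 0" "partial_differentiable j \<pi> x"
  shows "partial_differentiable j (\<lambda>y. sqrt (\<pi> y)) x"
    and "partial j (\<lambda>y. sqrt (\<pi> y)) x = partial j \<pi> x / (2 * sqrt (\<pi> x))"
  using has_real_derivative_sqrt_line[OF assms] by (rule partial_differentiableI, rule partial_eqI)

lemma partial_differentiable_partial_sqrt:
  assumes "open S" "x \<in> S" "\<And>y. y \<in> S \<Longrightarrow> \<pi> y > 0 \<and> partial_differentiable j \<pi> y"
    and "partial_differentiable j (partial j \<pi>) x"
  shows "partial_differentiable j (partial j (\<lambda>y. sqrt (\<pi> y))) x"
proof -
  have x: "\<pi> x > 0" "partial_differentiable j \<pi> x" using assms(2,3) by auto
  have first: "partial j (\<lambda>y. sqrt (\<pi> y)) y = partial j \<pi> y / (2 * sqrt (\<pi> y))"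
    if "y \<in> S" for y
    using assms(3)[OF that] partial_sqrt(2) by blast
  have "2 * sqrt (\<pi> (x + 0 *\<^sub>R axis j 1)) \<noteq> 0" using x(1) by simp
  note quotient = DERIV_divide[OF partial_differentiableD[OF assms(4)]
      DERIV_cmult[OF has_real_derivative_sqrt_line[OF x], of 2] this]
  show ?thesis
    by (rule partial_differentiableI[OF has_real_derivative_line_transform_open[OF assms(1,2) _ quotient]])
       (simp add: first)
qed

lemma hamiltonian_mult_sqrt:
  fixes \<pi> P :: "real^'n::finite \<Rightarrow> real"
  assumes "open S" "x \<in> S" and pos: "\<And>y. y \<in> S \<Longrightarrow> \<pi> y > 0"
    and first: "\<And>j y. y \<in> S \<Longrightarrow> partial_differentiable j \<pi> y \<and> partial_differentiable j P y"
    and second: "\<And>j. partial_differentiable j (partial j \<pi>) x \<and> partial_differentiable j (partial j P) x"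
  shows "hamiltonian \<pi> (\<lambda>y. P y * sqrt (\<pi> y)) x * sqrt (\<pi> x)
       = -(1/2) * (\<Sum>j\<in>UNIV. partial j \<pi> x * partial j P x + \<pi> x * partial j (partial j P) x)"
proof -
  define q where "q y = sqrt (\<pi> y)" for y
  have q_first: "partial_differentiable j q y" if "y \<in> S" for j y
    unfolding q_def using partial_sqrt(1) pos first that by blast
  have q_second: "partial_differentiable j (partial j q) x" for j
    unfolding q_def using partial_differentiable_partial_sqrt[OF assms(1,2)] pos first second by blast
  have pos_x: "\<pi> x > 0" using pos assms(2) .
  then have q_x: "q x > 0" "q x * q x = \<pi> x" unfolding q_def by auto
  have q_partial: "2 * q x * partial j q x = partial j \<pi> x" for j
    unfolding q_def using partial_sqrt(2) first assms(2) pos_x by force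
  let ?S = "\<Sum>j\<in>UNIV. partial j P x * partial j q x"
  have product: "laplacian (\<lambda>y. P y * q y) x = laplacian P x * q x + 2 * ?S + P x * laplacian q x"
  proof (rule laplacian_mult[OF assms(1,2)])
    show "partial_differentiable j P y \<and> partial_differentiable j q y" if "y \<in> S" for j y
      using first[OF that] q_first[OF that] by blast
    show "partial_differentiable j (partial j P) x \<and> partial_differentiable j (partial j q) x" for j
      using second q_second by blast
  qed
  have cancel: "laplacian q x / (2 * q x) * (P x * q x) = P x * laplacian q x / 2"
    using q_x(1) by simp
  have H: "hamiltonian \<pi> (\<lambda>y. P y * q y) x = -(1/2) * (laplacian P x * q x + 2 * ?S)"
    unfolding hamiltonian_def potential_def q_def[symmetric] product cancel by (simp add: algebra_simps)
  have S_eq: "2 * q x * ?S = (\<Sum>j\<in>UNIV. partial j \<pi> x * partial j P x)"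
    unfolding sum_distrib_left by (rule sum.cong[OF refl]) (simp add: q_partial[symmetric] algebra_simps)
  have "hamiltonian \<pi> (\<lambda>y. P y * q y) x * q x = -(1/2) * (laplacian P x * q x + 2 * ?S) * q x"
    using H by simp
  also have "\<dots> = -(1/2) * (laplacian P x * (q x * q x) + 2 * q x * ?S)"
    by (simp add: algebra_simps)
  also have "\<dots> = -(1/2) * (\<pi> x * laplacian P x + (\<Sum>j\<in>UNIV. partial j \<pi> x * partial j P x))"
    unfolding q_x(2) S_eq by (simp add: algebra_simps)
  also have "\<dots> = -(1/2) * (\<Sum>j\<in>UNIV. partial j \<pi> x * partial j P x + \<pi> x * partial j (partial j P) x)"
    unfolding laplacian_def sum_distrib_left sum.distrib by (simp add: add.commute)
  finally show ?thesis unfolding q_def .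
qed

section \<open>Integrals of directional derivatives\<close>

lemma abs_diff_le_of_deriv_bound:
  fixes L G :: "real \<Rightarrow> real"
  assumes "c \<le> d" "continuous_on {c..d} L"
    and deriv: "\<And>t. c < t \<Longrightarrow> t < d \<Longrightarrow> (L has_real_derivative G t) (at t) \<and> \<bar>G t\<bar> \<le> M"
  shows "\<bar>L d - L c\<bar> \<le> M * (d - c)"
proof (cases "c = d")
  case False
  then have "c < d" using assms(1) by simp
  moreover have "L differentiable (at t)" if "c < t" "t < d" for t
    using deriv[OF that] real_differentiable_def by blast
  ultimately obtain l z where z: "c < z" "z < d" "(L has_real_derivative l) (at z)"
    and mvt: "L d - L c = (d - c) * l"
    using MVT assms(2) by blast
  have "l = G z" using DERIV_unique[OF z(3)] deriv[OF z(1,2)] by blast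
  then have "\<bar>l\<bar> \<le> M" using deriv[OF z(1,2)] by blast
  then show ?thesis using \<open>c < d\<close> unfolding mvt by (simp add: abs_mult mult.commute mult_left_mono)
qed simp

lemma abs_diff_le_of_deriv_bound_off_zeros:
  fixes L G :: "real \<Rightarrow> real"
  assumes cont: "continuous_on UNIV L" and "M \<ge> 0"
    and deriv: "\<And>t. L t \<noteq> 0 \<Longrightarrow> (L has_real_derivative G t) (at t) \<and> \<bar>G t\<bar> \<le> M"
  shows "\<bar>L b - L a\<bar> \<le> M * \<bar>b - a\<bar>"
proof -
  have no_zeros: "\<bar>L d - L c\<bar> \<le> M * (d - c)"
    if "c \<le> d" and "\<And>t. c < t \<Longrightarrow> t < d \<Longrightarrow> L t \<noteq> 0" for c d
    by (rule abs_diff_le_of_deriv_bound[OF that(1) continuous_on_subset[OF cont subset_UNIV]])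
       (use deriv that(2) in blast)
  have ordered: "\<bar>L b - L a\<bar> \<le> M * (b - a)" if ab: "a \<le> b" for a b
  proof -
    define Z where "Z = {a..b} \<inter> {t. L t = 0}"
    have "compact Z"
      unfolding Z_def by (intro compact_Int_closed compact_Icc closed_Collect_eq cont continuous_on_const)
    \<comment> \<open>Only the stretches before the first and after the last zero of \<open>L\<close> in \<open>[a, b]\<close> contribute.\<close>
    show ?thesis
    proof (cases "Z = {}")
      case True
      then have "L t \<noteq> 0" if "a < t" "t < b" for t
        using that unfolding Z_def disjoint_iff by fastforce
      then show ?thesis by (rule no_zeros[OF ab])
    next
      case False
      obtain c1 where c1: "c1 \<in> Z" "\<And>t. t \<in> Z \<Longrightarrow> c1 \<le> t"
        using compact_attains_inf[OF \<open>compact Z\<close> False] by blast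
      obtain c2 where c2: "c2 \<in> Z" "\<And>t. t \<in> Z \<Longrightarrow> t \<le> c2"
        using compact_attains_sup[OF \<open>compact Z\<close> False] by blast
      have c12: "a \<le> c1" "c1 \<le> c2" "c2 \<le> b" "L c1 = 0" "L c2 = 0"
        using c1 c2 by (auto simp: Z_def)
      have "\<bar>L c1 - L a\<bar> \<le> M * (c1 - a)"
      proof (rule no_zeros[OF c12(1)])
        show "L t \<noteq> 0" if "a < t" "t < c1" for t
          using c1(2)[of t] that c12(2,3) unfolding Z_def by force
      qed
      moreover have "\<bar>L b - L c2\<bar> \<le> M * (b - c2)"
      proof (rule no_zeros[OF c12(3)])
        show "L t \<noteq> 0" if "c2 < t" "t < b" for t
          using c2(2)[of t] that c12(1,2) unfolding Z_def by force
      qed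
      moreover have "\<bar>L b - L a\<bar> \<le> \<bar>L b - L c2\<bar> + \<bar>L c1 - L a\<bar>"
        using c12(4,5) by (simp add: abs_triangle_ineq4)
      moreover have "M * (c2 - c1) \<ge> 0" using \<open>M \<ge> 0\<close> c12(2) by simp
      ultimately show ?thesis by (simp add: algebra_simps)
    qed
  qed
  show ?thesis
  proof (cases "a \<le> b")
    case True
    then show ?thesis using ordered[OF True] by (simp add: abs_of_nonneg)
  next
    case False
    then show ?thesis using ordered[of b a] by (simp add: abs_minus_commute abs_of_nonneg)
  qed
qed

lemma abs_diff_le_along_line:
  fixes F g :: "'a::real_normed_vector \<Rightarrow> real"
  assumes "continuous_on UNIV F" "M \<ge> 0"
    and deriv: "\<And>y. F y \<noteq> 0 \<Longrightarrow> ((\<lambda>t. F (y + t *\<^sub>R v)) has_real_derivative g y) (at 0) \<and> \<bar>g y\<bar> \<le> M"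
  shows "\<bar>F (y + h *\<^sub>R v) - F y\<bar> \<le> M * \<bar>h\<bar>"
proof -
  have "\<bar>F (y + h *\<^sub>R v) - F (y + 0 *\<^sub>R v)\<bar> \<le> M * \<bar>h - 0\<bar>"
  proof (rule abs_diff_le_of_deriv_bound_off_zeros[where G = "\<lambda>t. g (y + t *\<^sub>R v)"])
    show "continuous_on UNIV (\<lambda>t. F (y + t *\<^sub>R v))"
      by (rule continuous_on_compose2[OF assms(1)]) (auto intro!: continuous_intros)
    show "((\<lambda>t. F (y + t *\<^sub>R v)) has_real_derivative g (y + t *\<^sub>R v)) (at t) \<and> \<bar>g (y + t *\<^sub>R v)\<bar> \<le> M"
      if "F (y + t *\<^sub>R v) \<noteq> 0" for t
      using deriv[OF that] has_real_derivative_line_shift[of F y t v] by auto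
  qed fact
  then show ?thesis by simp
qed

lemma integrable_continuous_bounded_support:
  fixes F :: "'a::euclidean_space \<Rightarrow> real"
  assumes "continuous_on UNIV F" "bounded S" "\<And>y. y \<notin> S \<Longrightarrow> F y = 0"
  shows "integrable lborel F"
proof -
  obtain R where "\<And>y. y \<in> S \<Longrightarrow> norm y \<le> R" using assms(2) unfolding bounded_iff by blast
  then have F_eq: "F = (\<lambda>y. indicator (cball 0 R) y *\<^sub>R F y)"
    using assms(3) by (force simp: indicator_def)
  show ?thesis
    by (subst F_eq) (intro borel_integrable_compact compact_cball continuous_on_subset[OF assms(1)] subset_UNIV)
qed

lemma integral_lborel_difference_quotient_eq_0:
  fixes F :: "'a::euclidean_space \<Rightarrow> real"
  assumes "integrable lborel F" "F \<in> borel_measurable borel"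
  shows "integral\<^sup>L lborel (\<lambda>y. (F (y + c) - F y) / h) = 0"
proof -
  have "integrable lborel (\<lambda>y. F (y + c))" "integral\<^sup>L lborel (\<lambda>y. F (y + c)) = integral\<^sup>L lborel F"
    using integrable_distr_eq[of "(+) c" lborel borel F] integral_distr[of "(+) c" lborel borel F]
      assms lborel_distr_plus[of c]
    by (simp_all add: add.commute)
  then show ?thesis using assms(1) by simp
qed

lemma abs_difference_quotient_le_indicator:
  fixes F g :: "'a::real_normed_vector \<Rightarrow> real"
  assumes F: "continuous_on UNIV F" "\<And>y. y \<notin> \<Omega> \<Longrightarrow> F y = 0"
    and g: "\<And>y. y \<in> \<Omega> \<Longrightarrow> ((\<lambda>t. F (y + t *\<^sub>R v)) has_real_derivative g y) (at 0)"
      "\<And>y. y \<in> \<Omega> \<Longrightarrow> \<bar>g y\<bar> \<le> M" "M \<ge> 0"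
    and R: "\<And>y. y \<in> \<Omega> \<Longrightarrow> norm y \<le> R"
    and h: "0 < h" "h \<le> 1"
  shows "\<bar>(F (y + h *\<^sub>R v) - F y) / h\<bar> \<le> M * indicator (cball 0 (R + norm v)) y"
proof (cases "y \<in> \<Omega> \<or> y + h *\<^sub>R v \<in> \<Omega>")
  case True
  have "norm y \<le> R + norm v"
  proof (cases "y \<in> \<Omega>")
    case True
    then show ?thesis using R[OF True] norm_ge_zero[of v] by linarith
  next
    case False
    then have "norm (y + h *\<^sub>R v) \<le> R" using \<open>y \<in> \<Omega> \<or> y + h *\<^sub>R v \<in> \<Omega>\<close> R by blast
    moreover have "norm y \<le> norm (y + h *\<^sub>R v) + h * norm v"
      using norm_triangle_ineq4[of "y + h *\<^sub>R v" "h *\<^sub>R v"] h(1) by simp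
    moreover have "h * norm v \<le> norm v" using h by (simp add: mult_left_le_one_le)
    ultimately show ?thesis by linarith
  qed
  moreover have "\<bar>F (y + h *\<^sub>R v) - F y\<bar> \<le> M * \<bar>h\<bar>"
    by (rule abs_diff_le_along_line[OF F(1) g(3)]) (use F(2) g(1,2) in force)
  ultimately show ?thesis using h(1) by (simp add: divide_le_eq)
qed (use F(2) g(3) in \<open>simp add: indicator_def\<close>)

lemma tendsto_difference_quotient_off_frontier:
  fixes F g :: "'a::real_normed_vector \<Rightarrow> real"
  assumes "open \<Omega>" "\<And>y. y \<notin> \<Omega> \<Longrightarrow> F y = 0"
    and "\<And>y. y \<in> \<Omega> \<Longrightarrow> ((\<lambda>t. F (y + t *\<^sub>R v)) has_real_derivative g y) (at 0)"
    and h: "filterlim h (at 0) sequentially" and "y \<notin> frontier \<Omega>"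
  shows "(\<lambda>n. (F (y + h n *\<^sub>R v) - F y) / h n) \<longlonglongrightarrow> indicator \<Omega> y *\<^sub>R g y"
proof (cases "y \<in> \<Omega>")
  case True
  have "((\<lambda>t. (F (y + t *\<^sub>R v) - F y) / t) \<longlongrightarrow> g y) (at 0)"
    using assms(3)[OF True] unfolding has_field_derivative_iff by simp
  from filterlim_compose[OF this h] show ?thesis using True by simp
next
  case False
  have outside: "F z = 0" if "z \<notin> closure \<Omega>" for z
    using assms(2) closure_subset that by blast
  from False have "y \<in> - closure \<Omega>"
    using assms(1,5) by (simp add: frontier_def interior_open)
  moreover have "(\<lambda>n. y + h n *\<^sub>R v) \<longlonglongrightarrow> y + 0 *\<^sub>R v"
    using h unfolding filterlim_at by (intro tendsto_intros) auto
  ultimately have "eventually (\<lambda>n. y + h n *\<^sub>R v \<in> - closure \<Omega>) sequentially"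
    by (intro topological_tendstoD) auto
  then have "eventually (\<lambda>n. (F (y + h n *\<^sub>R v) - F y) / h n = 0) sequentially"
    by eventually_elim (use \<open>y \<in> - closure \<Omega>\<close> outside in simp)
  then show ?thesis using False by (simp add: tendsto_eventually)
qed

lemma set_integral_directional_derivative_eq_0:
  fixes F g :: "'a::euclidean_space \<Rightarrow> real"
  assumes \<Omega>: "open \<Omega>" "bounded \<Omega>" "frontier \<Omega> \<in> null_sets lborel"
    and F: "continuous_on UNIV F" "\<And>y. y \<notin> \<Omega> \<Longrightarrow> F y = 0"
    and g: "\<And>y. y \<in> \<Omega> \<Longrightarrow> ((\<lambda>t. F (y + t *\<^sub>R v)) has_real_derivative g y) (at 0)"
      "bounded (g ` \<Omega>)"
  shows "set_integrable lborel \<Omega> g" and "(LINT y:\<Omega>|lborel. g y) = 0"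
proof -
  obtain M where M: "M > 0" "\<And>y. y \<in> \<Omega> \<Longrightarrow> \<bar>g y\<bar> \<le> M"
    using g(2) unfolding bounded_pos by auto
  obtain R where R: "\<And>y. y \<in> \<Omega> \<Longrightarrow> norm y \<le> R" using \<Omega>(2) unfolding bounded_iff by blast
  define h :: "nat \<Rightarrow> real" where "h n = inverse (Suc n)" for n
  define q where "q n = (\<lambda>y. (F (y + h n *\<^sub>R v) - F y) / h n)" for n
  define K where "K = cball (0::'a) (R + norm v)"
  have h: "h n > 0" "h n \<le> 1" for n by (auto simp: h_def field_simps)
  have F_borel: "F \<in> borel_measurable borel" using F(1) by (rule borel_measurable_continuous_onI)
  have q_borel: "q n \<in> borel_measurable lborel" for n
    unfolding q_def measurable_lborel2 using F_borel by measurable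
  have q_integral: "integral\<^sup>L lborel (q n) = 0" for n
    unfolding q_def
    by (rule integral_lborel_difference_quotient_eq_0[OF integrable_continuous_bounded_support[OF F(1) \<Omega>(2) F(2)]
          F_borel])
  have bound: "AE y in lborel. norm (q n y) \<le> M * indicator K y" for n
    unfolding q_def K_def real_norm_def
    by (intro AE_I2 abs_difference_quotient_le_indicator[OF F g(1) M(2) less_imp_le[OF M(1)] R h])
  have bound_integrable: "integrable lborel (\<lambda>y. M * indicator K y :: real)"
    unfolding K_def by (intro integrable_mult_right integrable_real_indicator emeasure_bounded_finite) auto
  have h_tendsto: "filterlim h (at 0) sequentially"
    unfolding filterlim_at h_def using LIMSEQ_inverse_real_of_nat by auto
  have q_tendsto: "(\<lambda>n. q n y) \<longlonglongrightarrow> indicator \<Omega> y *\<^sub>R g y" if "y \<notin> frontier \<Omega>" for y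
    unfolding q_def by (rule tendsto_difference_quotient_off_frontier[OF \<Omega>(1) F(2) g(1) h_tendsto that])
  then have limit: "AE y in lborel. (\<lambda>n. q n y) \<longlonglongrightarrow> indicator \<Omega> y *\<^sub>R g y"
    by (intro AE_I'[OF \<Omega>(3)]) auto
  have limit_borel: "(\<lambda>y. indicator \<Omega> y *\<^sub>R g y) \<in> borel_measurable lborel"
  proof (rule borel_measurable_LIMSEQ_real)
    show "(\<lambda>n. indicator \<Omega> y *\<^sub>R q n y) \<longlonglongrightarrow> indicator \<Omega> y *\<^sub>R g y" for y
      using q_tendsto[of y] \<Omega>(1) by (cases "y \<in> \<Omega>") (auto simp: frontier_def interior_open)
    show "(\<lambda>y. indicator \<Omega> y *\<^sub>R q n y) \<in> borel_measurable lborel" for n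
      using borel_open[OF \<Omega>(1)] q_borel by (intro borel_measurable_scaleR borel_measurable_indicator) auto
  qed
  have "integrable lborel (\<lambda>y. indicator \<Omega> y *\<^sub>R g y)"
    by (rule integrable_dominated_convergence[OF limit_borel q_borel bound_integrable limit bound])
  moreover have "(\<lambda>n. integral\<^sup>L lborel (q n)) \<longlonglongrightarrow> integral\<^sup>L lborel (\<lambda>y. indicator \<Omega> y *\<^sub>R g y)"
    by (rule integral_dominated_convergence[OF limit_borel q_borel bound_integrable limit bound])
  ultimately show "set_integrable lborel \<Omega> g" and "(LINT y:\<Omega>|lborel. g y) = 0"
    unfolding set_integrable_def set_lebesgue_integral_def q_integral by (simp_all add: LIMSEQ_const_iff)
qed

lemma negligible_coordinate_graph:
  fixes g :: "real^'n::finite \<Rightarrow> real"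
  assumes "\<And>x. g differentiable (at x)"
    and independent: "\<And>x y. (\<And>i. i \<noteq> k \<Longrightarrow> x $ i = y $ i) \<Longrightarrow> g x = g y"
    and "s \<noteq> 0"
  shows "negligible {x. s * x $ k = g x}"
proof -
  define H where "H = {y::real^'n. axis k 1 \<bullet> y = 0}"
  define F where "F y = y + (g y / s) *\<^sub>R axis k 1" for y
  have "F differentiable_on H"
    unfolding F_def using assms(1,3)
    by (intro differentiable_at_imp_differentiable_on differentiable_add differentiable_ident
        differentiable_scaleR differentiable_divide differentiable_const) auto
  moreover have "negligible H" unfolding H_def by (rule negligible_hyperplane) simp
  ultimately have "negligible (F ` H)"
    by (rule negligible_differentiable_image_negligible[OF order_refl, rotated])
  moreover have "{x. s * x $ k = g x} \<subseteq> F ` H"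
  proof
    fix x assume "x \<in> {x. s * x $ k = g x}"
    then have xk: "x $ k = g x / s" using \<open>s \<noteq> 0\<close> by (simp add: field_simps)
    define y where "y = x - (x $ k) *\<^sub>R axis k 1"
    have "g y = g x" by (rule independent) (simp add: y_def axis_def)
    then have "F y = x" unfolding F_def y_def xk by simp
    moreover have "y \<in> H" unfolding H_def y_def by (simp add: inner_axis')
    ultimately show "x \<in> F ` H" by blast
  qed
  ultimately show ?thesis by (rule negligible_subset)
qed

lemma frontier_Int_open_subset_zero_set:
  fixes \<phi> :: "'a::topological_space \<Rightarrow> real"
  assumes "open \<Omega>" "open U" "continuous_on UNIV \<phi>" "\<Omega> \<inter> U = {x \<in> U. \<phi> x < 0}"
  shows "frontier \<Omega> \<inter> U \<subseteq> {x. \<phi> x = 0}"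
proof
  fix z assume z: "z \<in> frontier \<Omega> \<inter> U"
  have "U \<inter> \<Omega> \<subseteq> {x. \<phi> x \<le> 0}"
  proof
    fix x assume "x \<in> U \<inter> \<Omega>"
    then have "x \<in> {x \<in> U. \<phi> x < 0}" unfolding assms(4)[symmetric] by blast
    then show "x \<in> {x. \<phi> x \<le> 0}" by simp
  qed
  moreover have "closed {x. \<phi> x \<le> 0}" by (rule closed_Collect_le[OF assms(3) continuous_on_const])
  ultimately have "closure (U \<inter> \<Omega>) \<subseteq> {x. \<phi> x \<le> 0}" by (rule closure_minimal)
  moreover have "z \<in> closure (U \<inter> \<Omega>)"
    using open_Int_closure_subset[OF assms(2), of \<Omega>] z by (auto simp: frontier_def)
  ultimately have "\<phi> z \<le> 0" by blast
  moreover have "\<not> \<phi> z < 0"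
  proof
    assume "\<phi> z < 0"
    then have "z \<in> \<Omega> \<inter> U" unfolding assms(4) using z by simp
    then show False using z assms(1) by (simp add: frontier_def interior_open)
  qed
  ultimately show "z \<in> {x. \<phi> x = 0}" by simp
qed

lemma regular_boundary_frontier_null:
  fixes \<Omega> :: "(real^'n::finite) set"
  assumes "open \<Omega>" "regular_boundary \<Omega>"
  shows "frontier \<Omega> \<in> null_sets lborel"
proof -
  have "negligible (frontier \<Omega>)"
  proof (rule locally_negligible_alt[THEN iffD2], rule ballI)
    fix p assume p: "p \<in> frontier \<Omega>"
    from bspec[OF assms(2)[unfolded regular_boundary_def] p]
    obtain r k s g where r: "r > 0" "s \<in> {-1, 1}" "C1_on UNIV g"
      "\<forall>x y. (\<forall>i. i \<noteq> k \<longrightarrow> x $ i = y $ i) \<longrightarrow> g x = g y"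
      "\<Omega> \<inter> ball p r = {x \<in> ball p r. s * x $ k < g x}"
      by (elim exE bexE conjE)
    have diff: "g differentiable (at x)" for x
      using r(3) unfolding C1_on_def differentiable_def by blast
    then have "continuous_on UNIV g"
      by (intro differentiable_imp_continuous_on) (simp add: differentiable_on_def)
    then have "continuous_on UNIV (\<lambda>x. s * x $ k - g x)"
      by (intro continuous_on_diff continuous_on_mult continuous_on_const continuous_on_component
          continuous_on_id)
    then have "frontier \<Omega> \<inter> ball p r \<subseteq> {x. s * x $ k - g x = 0}"
      by (rule frontier_Int_open_subset_zero_set[OF assms(1) open_ball]) (simp add: r(5))
    moreover have "negligible {x. s * x $ k = g x}"
      using r(2,4) by (intro negligible_coordinate_graph diff) auto
    then have "negligible {x. s * x $ k - g x = 0}" by simp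
    ultimately have "negligible (frontier \<Omega> \<inter> ball p r)"
      by (rule negligible_subset[rotated])
    moreover have "openin (top_of_set (frontier \<Omega>)) (frontier \<Omega> \<inter> ball p r)"
      by (rule openin_open_Int[OF open_ball])
    moreover have "p \<in> frontier \<Omega> \<inter> ball p r" using p r(1) by simp
    ultimately show "\<exists>U. openin (top_of_set (frontier \<Omega>)) U \<and> p \<in> U \<and> negligible U" by blast
  qed
  then have "frontier \<Omega> \<in> null_sets lebesgue" by (simp add: negligible_iff_null_sets)
  then show ?thesis by (simp add: null_sets_completion_iff)
qed

lemma continuous_on_extend_by_zero:
  assumes "open \<Omega>" "continuous_on (closure \<Omega>) f" "\<And>x. x \<in> frontier \<Omega> \<Longrightarrow> f x = 0"
  shows "continuous_on UNIV (\<lambda>x. if x \<in> \<Omega> then f x else 0)"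
proof -
  have "continuous_on (closure \<Omega> \<union> - \<Omega>) (\<lambda>x. if x \<in> \<Omega> then f x else 0)"
  proof (rule continuous_on_closed_Un)
    show "continuous_on (closure \<Omega>) (\<lambda>x. if x \<in> \<Omega> then f x else 0)"
      using assms(2) by (rule continuous_on_eq) (use assms(1,3) in \<open>auto simp: frontier_def interior_open\<close>)
    show "continuous_on (- \<Omega>) (\<lambda>x. if x \<in> \<Omega> then f x else 0)"
      by (rule continuous_on_eq[OF continuous_on_const]) auto
  qed (use assms(1) in auto)
  moreover have "closure \<Omega> \<union> - \<Omega> = UNIV" using closure_subset by auto
  ultimately show ?thesis by simp
qed

lemma bounded_mult_comp:
  fixes f g :: "'a \<Rightarrow> 'b::real_normed_algebra"
  assumes "bounded (f ` S)" "bounded (g ` S)"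
  shows "bounded ((\<lambda>x. f x * g x) ` S)"
proof -
  obtain B C where B: "\<And>x. x \<in> S \<Longrightarrow> norm (f x) \<le> B" and C: "\<And>x. x \<in> S \<Longrightarrow> norm (g x) \<le> C"
    using assms unfolding bounded_iff by auto
  have "norm (f x * g x) \<le> B * C" if "x \<in> S" for x
  proof -
    have "norm (f x) * norm (g x) \<le> B * C"
      using B[OF that] C[OF that] order_trans[OF norm_ge_zero B[OF that]] by (intro mult_mono) auto
    then show ?thesis using norm_mult_ineq[of "f x" "g x"] by linarith
  qed
  then show ?thesis unfolding bounded_iff by blast
qed

lemma set_integral_sum:
  fixes f :: "'i \<Rightarrow> 'a \<Rightarrow> real"
  assumes "\<And>i. i \<in> I \<Longrightarrow> set_integrable M A (f i)"
  shows "set_integrable M A (\<lambda>x. \<Sum>i\<in>I. f i x)"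
    and "(LINT x:A|M. \<Sum>i\<in>I. f i x) = (\<Sum>i\<in>I. LINT x:A|M. f i x)"
  using assms unfolding set_integrable_def set_lebesgue_integral_def scaleR_sum_right
  by (auto intro: integral_sum)

lemma set_integral_partial_flux_eq_0:
  fixes \<pi> P :: "real^'n::finite \<Rightarrow> real"
  assumes \<Omega>: "open \<Omega>" "bounded \<Omega>" "frontier \<Omega> \<in> null_sets lborel"
    and \<pi>: "continuous_on (closure \<Omega>) \<pi>" "\<And>y. y \<in> \<Omega> \<Longrightarrow> partial_differentiable j \<pi> y"
      "uniformly_continuous_on \<Omega> (partial j \<pi>)"
    and P: "is_polynomial P"
    and boundary: "\<And>x. x \<in> frontier \<Omega> \<Longrightarrow> \<pi> x * partial j P x = 0"
  shows "set_integrable lborel \<Omega> (\<lambda>x. partial j \<pi> x * partial j P x + \<pi> x * partial j (partial j P) x)"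
    and "(LINT x:\<Omega>|lborel. partial j \<pi> x * partial j P x + \<pi> x * partial j (partial j P) x) = 0"
proof -
  define F where "F y = (if y \<in> \<Omega> then \<pi> y * partial j P y else 0)" for y
  have P_partial: "is_polynomial (partial j P)" using P by (rule is_polynomial_partial)
  have F_zero: "F y = 0" if "y \<notin> \<Omega>" for y
    using that by (simp add: F_def)
  have F_cont: "continuous_on UNIV F"
    unfolding F_def using \<Omega>(1) boundary
    by (intro continuous_on_extend_by_zero continuous_on_mult \<pi>(1) continuous_on_polynomial[OF P_partial])
  have F_deriv: "((\<lambda>t. F (y + t *\<^sub>R axis j 1)) has_real_derivative
      partial j \<pi> y * partial j P y + \<pi> y * partial j (partial j P) y) (at 0)" if "y \<in> \<Omega>" for y
  proof (rule has_real_derivative_line_transform_open[OF \<Omega>(1) that])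
    show "((\<lambda>t. \<pi> (y + t *\<^sub>R axis j 1) * partial j P (y + t *\<^sub>R axis j 1)) has_real_derivative
        partial j \<pi> y * partial j P y + \<pi> y * partial j (partial j P) y) (at 0)"
      using DERIV_mult[OF partial_differentiableD[OF \<pi>(2)[OF that]]
          partial_differentiableD[OF polynomial_partial_differentiable[OF P_partial]]]
      by (simp add: mult.commute)
  qed (simp add: F_def)
  have bounded: "bounded ((\<lambda>y. partial j \<pi> y * partial j P y + \<pi> y * partial j (partial j P) y) ` \<Omega>)"
  proof -
    have bounded_closure: "bounded (f ` \<Omega>)" if "continuous_on (closure \<Omega>) f" for f :: "_ \<Rightarrow> real"
      using compact_continuous_image[OF that] \<Omega>(2) closure_subset
      by (metis bounded_subset compact_closure compact_imp_bounded image_mono)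
    show ?thesis
      by (intro bounded_plus_comp bounded_mult_comp bounded_uniformly_continuous_image[OF \<pi>(3) \<Omega>(2)]
          bounded_closure \<pi>(1) continuous_on_polynomial P_partial is_polynomial_partial)
  qed
  show "set_integrable lborel \<Omega> (\<lambda>x. partial j \<pi> x * partial j P x + \<pi> x * partial j (partial j P) x)"
    and "(LINT x:\<Omega>|lborel. partial j \<pi> x * partial j P x + \<pi> x * partial j (partial j P) x) = 0"
    using set_integral_directional_derivative_eq_0[OF \<Omega> F_cont F_zero F_deriv bounded] by blast+
qed

lemma set_integral_divergence_eq_0:
  fixes \<pi> P :: "real^'n::finite \<Rightarrow> real"
  assumes "open \<Omega>" "bounded \<Omega>" "frontier \<Omega> \<in> null_sets lborel"
    and "continuous_on (closure \<Omega>) \<pi>" "\<And>j y. y \<in> \<Omega> \<Longrightarrow> partial_differentiable j \<pi> y"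
      "\<And>j. uniformly_continuous_on \<Omega> (partial j \<pi>)"
    and "is_polynomial P"
    and "\<And>j x. x \<in> frontier \<Omega> \<Longrightarrow> \<pi> x * partial j P x = 0"
  shows "set_integrable lborel \<Omega>
           (\<lambda>x. \<Sum>j\<in>UNIV. partial j \<pi> x * partial j P x + \<pi> x * partial j (partial j P) x)"
    and "(LINT x:\<Omega>|lborel. \<Sum>j\<in>UNIV. partial j \<pi> x * partial j P x + \<pi> x * partial j (partial j P) x) = 0"
proof -
  note flux = set_integral_partial_flux_eq_0[OF assms]
  show "set_integrable lborel \<Omega>
      (\<lambda>x. \<Sum>j\<in>UNIV. partial j \<pi> x * partial j P x + \<pi> x * partial j (partial j P) x)"
    by (rule set_integral_sum(1)) (rule flux(1))
  have "(LINT x:\<Omega>|lborel. \<Sum>j\<in>UNIV. partial j \<pi> x * partial j P x + \<pi> x * partial j (partial j P) x)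
      = (\<Sum>j\<in>UNIV. LINT x:\<Omega>|lborel. partial j \<pi> x * partial j P x + \<pi> x * partial j (partial j P) x)"
    by (rule set_integral_sum(2)) (rule flux(1))
  then show "(LINT x:\<Omega>|lborel. \<Sum>j\<in>UNIV. partial j \<pi> x * partial j P x + \<pi> x * partial j (partial j P) x) = 0"
    by (simp add: flux(2))
qed

section \<open>Unbiasedness of the zero-variance estimator\<close>

lemma set_integral_control_variate:
  fixes f h \<pi> :: "'a \<Rightarrow> real"
  assumes "\<And>x. x \<in> \<Omega> \<Longrightarrow> \<pi> x > 0" "\<Omega> \<in> sets M"
    and "set_integrable M \<Omega> (\<lambda>x. h x * sqrt (\<pi> x))" "(LINT x:\<Omega>|M. h x * sqrt (\<pi> x)) = 0"
    and "set_integrable M \<Omega> (\<lambda>x. f x * \<pi> x)"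
  shows "set_integrable M \<Omega> (\<lambda>x. (f x + h x / sqrt (\<pi> x)) * \<pi> x)"
    and "(LINT x:\<Omega>|M. (f x + h x / sqrt (\<pi> x)) * \<pi> x) = (LINT x:\<Omega>|M. f x * \<pi> x)"
proof -
  have split: "(f x + h x / sqrt (\<pi> x)) * \<pi> x = f x * \<pi> x + h x * sqrt (\<pi> x)" if "x \<in> \<Omega>" for x
  proof -
    have div: "\<pi> x / sqrt (\<pi> x) = sqrt (\<pi> x)" using assms(1)[OF that] by (simp add: real_div_sqrt)
    have "(f x + h x / sqrt (\<pi> x)) * \<pi> x = f x * \<pi> x + h x * (\<pi> x / sqrt (\<pi> x))"
      by (simp add: distrib_right)
    then show ?thesis unfolding div .
  qed
  have "set_integrable M \<Omega> (\<lambda>x. (f x + h x / sqrt (\<pi> x)) * \<pi> x)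
      \<longleftrightarrow> set_integrable M \<Omega> (\<lambda>x. f x * \<pi> x + h x * sqrt (\<pi> x))"
    by (rule set_integrable_cong) (simp_all add: split)
  then show "set_integrable M \<Omega> (\<lambda>x. (f x + h x / sqrt (\<pi> x)) * \<pi> x)"
    using set_integral_add(1)[OF assms(5,3)] by simp
  have "(LINT x:\<Omega>|M. (f x + h x / sqrt (\<pi> x)) * \<pi> x) = (LINT x:\<Omega>|M. f x * \<pi> x + h x * sqrt (\<pi> x))"
    by (rule set_lebesgue_integral_cong[OF assms(2)]) (simp add: split)
  also have "\<dots> = (LINT x:\<Omega>|M. f x * \<pi> x) + (LINT x:\<Omega>|M. h x * sqrt (\<pi> x))"
    by (rule set_integral_add(2)[OF assms(5,3)])
  finally show "(LINT x:\<Omega>|M. (f x + h x / sqrt (\<pi> x)) * \<pi> x) = (LINT x:\<Omega>|M. f x * \<pi> x)"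
    using assms(4) by simp
qed

theorem proposition1:
  fixes \<Omega> :: "(real^'n) set" and \<pi> P :: "real^'n \<Rightarrow> real"
  assumes "open \<Omega>" and "bounded \<Omega>" and "regular_boundary \<Omega>"
    and "\<forall>x\<in>\<Omega>. \<pi> x > 0"
    and "set_integrable lborel \<Omega> \<pi>" and "(LINT x:\<Omega>|lborel. \<pi> x) = 1"
    and "C2_on \<Omega> \<pi>"
    and "continuous_on (closure \<Omega>) \<pi>"
    and "\<forall>i. uniformly_continuous_on \<Omega> (partial i \<pi>)"
    and "\<forall>i j. uniformly_continuous_on \<Omega> (partial i (partial j \<pi>))"
    and "is_polynomial P"
    and "\<forall>x\<in>frontier \<Omega>. \<forall>j. \<pi> x * partial j P x = 0"
  shows "set_integrable lborel \<Omega>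
           (\<lambda>x. hamiltonian \<pi> (\<lambda>y. P y * sqrt (\<pi> y)) x * sqrt (\<pi> x))
       \<and> (LINT x:\<Omega>|lborel. hamiltonian \<pi> (\<lambda>y. P y * sqrt (\<pi> y)) x * sqrt (\<pi> x)) = 0
       \<and> (\<forall>f. set_integrable lborel \<Omega> (\<lambda>x. f x * \<pi> x) \<longrightarrow>
            set_integrable lborel \<Omega>
              (\<lambda>x. (f x + hamiltonian \<pi> (\<lambda>y. P y * sqrt (\<pi> y)) x / sqrt (\<pi> x)) * \<pi> x)
          \<and> (LINT x:\<Omega>|lborel.
               (f x + hamiltonian \<pi> (\<lambda>y. P y * sqrt (\<pi> y)) x / sqrt (\<pi> x)) * \<pi> x)
            = (LINT x:\<Omega>|lborel. f x * \<pi> x))"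
proof -
  have pos: "\<And>x. x \<in> \<Omega> \<Longrightarrow> \<pi> x > 0" using assms(4) by blast
  have \<Omega>_sets: "\<Omega> \<in> sets lborel" using assms(1) by simp
  have first: "partial_differentiable j \<pi> y \<and> partial_differentiable j P y" if "y \<in> \<Omega>" for j y
    using C2_on_partial_differentiable(1)[OF assms(1,7) that] polynomial_partial_differentiable[OF assms(11)]
    by blast
  have second: "partial_differentiable j (partial j \<pi>) x \<and> partial_differentiable j (partial j P) x"
    if "x \<in> \<Omega>" for j x
    using C2_on_partial_differentiable(2)[OF assms(1,7) that]
      polynomial_partial_differentiable[OF is_polynomial_partial[OF assms(11)]] by blast
  have diff: "\<And>j y. y \<in> \<Omega> \<Longrightarrow> partial_differentiable j \<pi> y" using first by blast
  have boundary: "\<And>j x. x \<in> frontier \<Omega> \<Longrightarrow> \<pi> x * partial j P x = 0" using assms(12) by blast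
  define divergence where "divergence = (\<lambda>x. \<Sum>j\<in>UNIV. partial j \<pi> x * partial j P x + \<pi> x * partial j (partial j P) x)"
  have divergence_integral: "set_integrable lborel \<Omega> divergence" "(LINT x:\<Omega>|lborel. divergence x) = 0"
    using set_integral_divergence_eq_0[OF assms(1,2) regular_boundary_frontier_null[OF assms(1,3)] assms(8)
        diff assms(9)[rule_format] assms(11) boundary]
    unfolding divergence_def by blast+
  have H: "hamiltonian \<pi> (\<lambda>y. P y * sqrt (\<pi> y)) x * sqrt (\<pi> x) = -(1/2) * divergence x" if "x \<in> \<Omega>" for x
    unfolding divergence_def by (rule hamiltonian_mult_sqrt[OF assms(1) that pos first second[OF that]])
  have "set_integrable lborel \<Omega> (\<lambda>x. hamiltonian \<pi> (\<lambda>y. P y * sqrt (\<pi> y)) x * sqrt (\<pi> x))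
      \<longleftrightarrow> set_integrable lborel \<Omega> (\<lambda>x. -(1/2) * divergence x)"
    by (rule set_integrable_cong) (simp_all add: H)
  then have H_integrable:
    "set_integrable lborel \<Omega> (\<lambda>x. hamiltonian \<pi> (\<lambda>y. P y * sqrt (\<pi> y)) x * sqrt (\<pi> x))"
    using set_integrable_mult_right[where a="-(1/2)", OF divergence_integral(1)] by blast
  have "(LINT x:\<Omega>|lborel. hamiltonian \<pi> (\<lambda>y. P y * sqrt (\<pi> y)) x * sqrt (\<pi> x))
      = (LINT x:\<Omega>|lborel. -(1/2) * divergence x)"
    by (rule set_lebesgue_integral_cong[OF \<Omega>_sets]) (simp add: H)
  then have H_zero: "(LINT x:\<Omega>|lborel. hamiltonian \<pi> (\<lambda>y. P y * sqrt (\<pi> y)) x * sqrt (\<pi> x)) = 0"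
    unfolding set_integral_mult_right divergence_integral(2) by simp
  show ?thesis
    using H_integrable H_zero set_integral_control_variate[OF pos \<Omega>_sets H_integrable H_zero] by blast
qed

end
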